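(* There is no automorphism $\varphi$ of $E$ of type 4 which is a translation by a constant, i.e. such that for some basis $\{e_n\}_{n\in\mathbb{N}}$ of $L$ and some fixed $P\in E$ containing a summand of length $\ge2$, one has $\varphi(e_n)=-e_n+2P$ for all $n\in\mathbb{N}$.
   Context: $F$ is a field of characteristic zero, $L$ an infinite-dimensional $F$-vector space, $E$ the Grassmann algebra of $L$ (for a basis $\{e_n\}$ of $L$, basis $1$ and monomials $e_{i_1}\cdots e_{i_m}$, $i_1<\cdots<i_m$, of length $m$). An automorphism $\varphi$ of $E$ with $\varphi^2=\mathrm{id}$ is of type 4 if for every basis $\gamma$ of $L$ no element $v\in\gamma$ satisfies $\varphi(v)=\pm v$. *)

theory Defs
  imports Main
begin

text \<open>Concrete model of the Grassmann algebra E of a countably-infinite-dimensional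
vector space L over a field 'a.  L has standard basis g_0, g_1, ...; an element of E
is a finitely supported function from finite subsets S of nat to 'a, the value at S
being the coefficient of the monomial g_{i1}...g_{im} (i1 < ... < im, S = {i1,...,im}).\<close>

type_synonym 'a grass = "nat set \<Rightarrow> 'a"

definition gsupp :: "'a::zero grass \<Rightarrow> nat set set" where
  "gsupp f = {S. f S \<noteq> 0}"

definition gcarrier :: "'a::zero grass set" where
  "gcarrier = {f. finite (gsupp f) \<and> (\<forall>S \<in> gsupp f. finite S)}"

definition gadd :: "'a::ring grass \<Rightarrow> 'a grass \<Rightarrow> 'a grass" where
  "gadd f g = (\<lambda>S. f S + g S)"

definition gscale :: "'a::ring \<Rightarrow> 'a grass \<Rightarrow> 'a grass" where
  "gscale c f = (\<lambda>S. c * f S)"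

text \<open>Sign of the product of monomials e_S * e_T (S, T disjoint): number of inversions.\<close>
definition gsign :: "nat set \<Rightarrow> nat set \<Rightarrow> 'a::ring_1" where
  "gsign S T = (-1) ^ card {(i, j). i \<in> S \<and> j \<in> T \<and> j < i}"

definition gmult :: "'a::ring_1 grass \<Rightarrow> 'a grass \<Rightarrow> 'a grass" where
  "gmult f g = (\<lambda>U. \<Sum>(S, T) \<in> {(S, T). S \<in> gsupp f \<and> T \<in> gsupp g \<and> S \<inter> T = {} \<and> S \<union> T = U}.
      gsign S T * f S * g T)"

definition gL :: "'a::zero grass set" where
  "gL = {f \<in> gcarrier. \<forall>S \<in> gsupp f. card S = 1}"

definition lincomb :: "('a grass \<Rightarrow> 'a::ring) \<Rightarrow> 'a grass set \<Rightarrow> 'a grass" where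
  "lincomb c A = (\<lambda>S. \<Sum>v\<in>A. c v * v S)"

definition is_basis_L :: "'a::ring grass set \<Rightarrow> bool" where
  "is_basis_L B \<longleftrightarrow> B \<subseteq> gL
     \<and> (\<forall>A c. finite A \<and> A \<subseteq> B \<and> lincomb c A = (\<lambda>_. 0) \<longrightarrow> (\<forall>v\<in>A. c v = 0))
     \<and> (\<forall>x\<in>gL. \<exists>A c. finite A \<and> A \<subseteq> B \<and> x = lincomb c A)"

definition is_aut :: "('a::ring_1 grass \<Rightarrow> 'a grass) \<Rightarrow> bool" where
  "is_aut \<phi> \<longleftrightarrow> bij_betw \<phi> gcarrier gcarrier
     \<and> (\<forall>f\<in>gcarrier. \<forall>g\<in>gcarrier. \<phi> (gadd f g) = gadd (\<phi> f) (\<phi> g))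
     \<and> (\<forall>c. \<forall>f\<in>gcarrier. \<phi> (gscale c f) = gscale c (\<phi> f))
     \<and> (\<forall>f\<in>gcarrier. \<forall>g\<in>gcarrier. \<phi> (gmult f g) = gmult (\<phi> f) (\<phi> g))"

definition is_involution :: "('a::ring_1 grass \<Rightarrow> 'a grass) \<Rightarrow> bool" where
  "is_involution \<phi> \<longleftrightarrow> (\<forall>x\<in>gcarrier. \<phi> (\<phi> x) = x)"

definition type4 :: "('a::ring_1 grass \<Rightarrow> 'a grass) \<Rightarrow> bool" where
  "type4 \<phi> \<longleftrightarrow> is_aut \<phi> \<and> is_involution \<phi> \<and>
     (\<forall>B. is_basis_L B \<longrightarrow> \<not> (\<exists>v\<in>B. \<phi> v = v \<or> \<phi> v = (\<lambda>S. - v S)))"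

end

theory Submission
  imports Defs HOL.Vector_Spaces "HOL-Library.Function_Algebras"
begin

text \<open>If \<open>\<phi>(e\<^sub>n) = -e\<^sub>n + 2P\<close> for all \<open>n\<close>, the constant \<open>P\<close> cancels in differences:
\<open>\<phi>(e\<^sub>0 - e\<^sub>1) = -(e\<^sub>0 - e\<^sub>1)\<close>. Replacing \<open>e\<^sub>0\<close> by \<open>e\<^sub>0 - e\<^sub>1\<close> gives another basis of \<open>L\<close>,
and it contains an element negated by \<open>\<phi>\<close>, so \<open>\<phi>\<close> is not of type 4.\<close>

interpretation grass: vector_space "gscale :: 'a::field \<Rightarrow> 'a grass \<Rightarrow> 'a grass"
  by unfold_locales (simp_all add: gscale_def fun_eq_iff algebra_simps)

lemma sum_fun_apply:
  fixes f :: "'b \<Rightarrow> 'c \<Rightarrow> 'd::comm_monoid_add"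
  shows "(\<Sum>v\<in>A. f v) x = (\<Sum>v\<in>A. f v x)"
  by (induction A rule: infinite_finite_induct) simp_all

lemma lincomb_eq_sum_gscale: "lincomb c A = (\<Sum>v\<in>A. gscale (c v) v)"
  by (simp add: lincomb_def gscale_def sum_fun_apply fun_eq_iff)

lemma is_basis_L_iff:
  fixes B :: "'a::field grass set"
  shows "is_basis_L B \<longleftrightarrow> B \<subseteq> gL \<and> grass.independent B \<and> gL \<subseteq> grass.span B"
proof -
  have indep: "(\<forall>A c. finite A \<and> A \<subseteq> B \<and> lincomb c A = (\<lambda>_. 0) \<longrightarrow> (\<forall>v\<in>A. c v = 0))
      \<longleftrightarrow> grass.independent B"
    unfolding grass.independent_explicit_module lincomb_eq_sum_gscale zero_fun_def by blast
  have span: "(\<forall>x\<in>gL. \<exists>A c. finite A \<and> A \<subseteq> B \<and> x = lincomb c A) \<longleftrightarrow> gL \<subseteq> grass.span B"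
    unfolding grass.span_explicit lincomb_eq_sum_gscale by blast
  show ?thesis
    by (simp only: is_basis_L_def indep span)
qed

lemma gL_diff:
  fixes a b :: "'a::ab_group_add grass"
  assumes "a \<in> gL" "b \<in> gL"
  shows "a - b \<in> gL"
proof -
  have supp: "gsupp (a - b) \<subseteq> gsupp a \<union> gsupp b"
    by (auto simp: gsupp_def)
  have fin: "finite (gsupp a \<union> gsupp b)" and card: "\<forall>S \<in> gsupp a \<union> gsupp b. card S = 1"
    using assms by (auto simp: gL_def gcarrier_def)
  have "finite (gsupp (a - b))"
    by (rule finite_subset[OF supp fin])
  moreover have card_supp: "\<forall>S \<in> gsupp (a - b). card S = 1"
    using supp card by blast
  moreover from card_supp have "\<forall>S \<in> gsupp (a - b). finite S"
    by (metis card.infinite zero_neq_one)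
  ultimately show ?thesis
    by (simp add: gL_def gcarrier_def)
qed

lemma gscale_carrier:
  assumes "a \<in> gcarrier"
  shows "gscale c a \<in> gcarrier"
proof -
  have supp: "gsupp (gscale c a) \<subseteq> gsupp a"
    by (auto simp: gsupp_def gscale_def)
  have "finite (gsupp (gscale c a))"
    using assms rev_finite_subset[OF _ supp] by (simp add: gcarrier_def)
  then show ?thesis
    using assms supp by (auto simp: gcarrier_def)
qed

context vector_space
begin

lemma span_replace_by_diff:
  assumes "u \<in> B" "w \<in> B" "u \<noteq> w"
  shows "span (insert (u - w) (B - {u})) = span B"
proof (rule antisym)
  have "u - w \<in> span B"
    using assms by (simp add: span_base span_diff)
  have "span (insert (u - w) (B - {u})) \<subseteq> span (insert (u - w) B)"
    by (rule span_mono) blast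
  also have "\<dots> = span B"
    using \<open>u - w \<in> span B\<close> by (rule span_redundant)
  finally show "span (insert (u - w) (B - {u})) \<subseteq> span B" .
next
  have "u \<in> span (insert (u - w) (B - {u}))"
    using span_add[of "u - w" _ w] assms by (simp add: span_base)
  have "span B \<subseteq> span (insert u (insert (u - w) (B - {u})))"
    by (rule span_mono) blast
  also have "\<dots> = span (insert (u - w) (B - {u}))"
    using \<open>u \<in> span (insert (u - w) (B - {u}))\<close> by (rule span_redundant)
  finally show "span B \<subseteq> span (insert (u - w) (B - {u}))" .
qed

lemma independent_replace_by_diff:
  assumes "independent B" "u \<in> B" "w \<in> B" "u \<noteq> w"
  shows "independent (insert (u - w) (B - {u}))"
proof (rule independent_insertI)
  show "independent (B - {u})"
    using assms(1) by (rule independent_mono) blast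
  show "u - w \<notin> span (B - {u})"
  proof
    assume "u - w \<in> span (B - {u})"
    moreover have "w \<in> span (B - {u})"
      using assms by (simp add: span_base)
    ultimately have "(u - w) + w \<in> span (B - {u})"
      by (rule span_add)
    then have "dependent B"
      using assms(2) unfolding dependent_def by auto
    with assms(1) show False ..
  qed
qed

end

lemma is_basis_L_replace_by_diff:
  fixes B :: "'a::field grass set"
  assumes "is_basis_L B" "u \<in> B" "w \<in> B" "u \<noteq> w"
  shows "is_basis_L (insert (u - w) (B - {u}))"
proof -
  from assms(1) have B: "B \<subseteq> gL" "grass.independent B" "gL \<subseteq> grass.span B"
    by (simp_all add: is_basis_L_iff)
  have "u - w \<in> gL"
    using B(1) assms(2,3) by (blast intro: gL_diff)
  with B(1) have "insert (u - w) (B - {u}) \<subseteq> gL"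
    by blast
  moreover have "grass.independent (insert (u - w) (B - {u}))"
    using B(2) assms(2-4) by (rule grass.independent_replace_by_diff)
  moreover have "gL \<subseteq> grass.span (insert (u - w) (B - {u}))"
    using B(3) grass.span_replace_by_diff[OF assms(2-4)] by simp
  ultimately show ?thesis
    by (simp add: is_basis_L_iff)
qed

lemma is_aut_diff:
  assumes "is_aut \<phi>" "a \<in> gcarrier" "b \<in> gcarrier"
  shows "\<phi> (a - b) = \<phi> a - \<phi> b"
proof -
  have "a - b = gadd a (gscale (-1) b)"
    by (simp add: gadd_def gscale_def fun_eq_iff)
  then have "\<phi> (a - b) = gadd (\<phi> a) (gscale (-1) (\<phi> b))"
    using assms gscale_carrier[of b] by (simp add: is_aut_def)
  also have "\<dots> = \<phi> a - \<phi> b"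
    by (simp add: gadd_def gscale_def fun_eq_iff)
  finally show ?thesis .
qed

theorem mainTheorem13:
  fixes \<phi> :: "'a::field_char_0 grass \<Rightarrow> 'a grass"
  shows "\<not> (type4 \<phi> \<and>
     (\<exists>e :: nat \<Rightarrow> 'a grass. \<exists>P \<in> gcarrier.
        inj e \<and> is_basis_L (range e) \<and> (\<exists>S. card S \<ge> 2 \<and> P S \<noteq> 0) \<and>
        (\<forall>n. \<phi> (e n) = (\<lambda>S. - e n S + 2 * P S))))"
proof
  assume "type4 \<phi> \<and> (\<exists>e :: nat \<Rightarrow> 'a grass. \<exists>P \<in> gcarrier.
        inj e \<and> is_basis_L (range e) \<and> (\<exists>S. card S \<ge> 2 \<and> P S \<noteq> 0) \<and>
        (\<forall>n. \<phi> (e n) = (\<lambda>S. - e n S + 2 * P S)))"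
  then obtain e :: "nat \<Rightarrow> 'a grass" and P where type4: "type4 \<phi>" and "inj e"
    and basis: "is_basis_L (range e)" and translation: "\<And>n. \<phi> (e n) = (\<lambda>S. - e n S + 2 * P S)"
    by blast
  let ?v = "e 0 - e 1"
  have "e 0 \<noteq> e 1"
    using \<open>inj e\<close> by (auto dest: injD)
  with basis have "is_basis_L (insert ?v (range e - {e 0}))"
    by (intro is_basis_L_replace_by_diff) auto
  moreover have "\<phi> ?v = (\<lambda>S. - ?v S)"
  proof -
    have "is_aut \<phi>"
      using type4 by (simp add: type4_def)
    moreover have "range e \<subseteq> gcarrier"
      using basis by (auto simp: is_basis_L_def gL_def)
    ultimately have "\<phi> ?v = \<phi> (e 0) - \<phi> (e 1)"
      by (intro is_aut_diff) auto
    then show ?thesis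
      by (simp add: translation fun_eq_iff)
  qed
  ultimately show False
    using type4 unfolding type4_def by blast
qed

end
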